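(* Let $G=(V,E)$ be a nice graph and $J$ a good subset of $V$. Then there exists a $J$-covering family $\mathcal{C}$ such that $K_{\mathcal{C}}(e)\le5$ for all $e\in E\setminus E_{J,1}$ and $K_{\mathcal{C}}(e)=0$ for all $e\in E_{J,1}$.
   Context: All graphs are finite and simple. An edge is isolated if both its ends have degree $1$; a graph is nice if it has no isolated edges. For $J\subseteq V$: $E_{J,1}$ is the set of non-isolated edges of $G-J$; $E_{J,2}$ the isolated edges of $G-J$; $E_{J,3}$ the edges with exactly one end in $J$; $E_{J,4}$ the edges with both ends in $J$; $G_{J,3}=(V,E_{J,3})$, $G_{J,4}=(J,E_{J,4})$; $d_{G_{J,3}}(j)$ is the number of edges of $E_{J,3}$ at $j$. For $i\in V\setminus J$, if $N_{G_{J,3}}(i)=\{j\}$ then $i$ is a private neighbour of $j$. A set $J\subseteq V$ is a good subset if $J\ne\emptyset$ and: (J1) $G_{J,4}$ has maximum degree at most $1$; (J2) $G_{J,3}$ has no isolated edges; (J3) each $j\in J$ has at most one private neighbour; (J4) for each $e=\{j,j'\}\in E_{J,4}$ there is $i_e\in V\setminus J$ with $\{j,j'\}\subseteq N_{G_{J,3}}(i_e)$, neither $j$ nor $j'$ has a private neighbour, and $i_e\ne i_{e'}$ for distinct $e,e'\in E_{J,4}$; (J5) for every $e\in E_{J,2}$, each end vertex of $e$ has a neighbour in $J$. A subgraph family is a multiset of subgraphs of $G$. An $E_{J,2}$-covering family is a family $\{C_e:e\in E_{J,2}\}$ where each $C_e$ is an edge of $E_{J,3}$ sharing an end vertex with $e$.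 An $E_{J,3}$-covering family is a family $\mathcal{C}_{J,3}$ of paths in $G$, each with two distinct end vertices both in $J$, such that (i) for each pair of distinct $j,j'\in J$ the number of even-length paths in the family joining $j,j'$ is even and the number of odd-length ones is even; (ii) for each $j\in J$, $d_{\mathcal{C}_{J,3}}(j)\ge2d_{G_{J,3}}(j)$, where $d_{\mathcal{C}_{J,3}}(j)$ is the number of paths (with multiplicity) with end vertex $j$. An $E_{J,4}$-covering family is a family $\{C_e:e\in E_{J,4}\}$ where each $C_e$ is an odd-length closed walk containing $e$. A $J$-covering family is a union $\mathcal{C}=\mathcal{C}_{J,2}\cup\mathcal{C}_{J,3}\cup\mathcal{C}_{J,4}$ of an $E_{J,2}$-, $E_{J,3}$- and $E_{J,4}$-covering family. For a subgraph $H$, $K_H:E\to\{0,1\}$ is the indicator of $E(H)$; $K_{\mathcal{H}}=\sum_{H\in\mathcal{H}}K_H$ with multiplicity. *)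

theory Defs
  imports Main "HOL-Library.Multiset"
begin

definition simple_graph :: "'a set \<Rightarrow> 'a set set \<Rightarrow> bool" where
  "simple_graph V E \<longleftrightarrow> finite V \<and> (\<forall>e\<in>E. e \<subseteq> V \<and> card e = 2)"

definition deg :: "'a set set \<Rightarrow> 'a \<Rightarrow> nat" where
  "deg F v = card {e\<in>F. v \<in> e}"

definition isolated_edge :: "'a set set \<Rightarrow> 'a set \<Rightarrow> bool" where
  "isolated_edge F e \<longleftrightarrow> e \<in> F \<and> (\<forall>v\<in>e. deg F v = 1)"

definition nice :: "'a set \<Rightarrow> 'a set set \<Rightarrow> bool" where
  "nice V E \<longleftrightarrow> simple_graph V E \<and> (\<forall>e\<in>E. \<not> isolated_edge E e)"

definition edges_minus :: "'a set set \<Rightarrow> 'a set \<Rightarrow> 'a set set" where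
  "edges_minus E J = {e\<in>E. e \<inter> J = {}}"

definition EJ1 :: "'a set set \<Rightarrow> 'a set \<Rightarrow> 'a set set" where
  "EJ1 E J = {e\<in>edges_minus E J. \<not> isolated_edge (edges_minus E J) e}"

definition EJ2 :: "'a set set \<Rightarrow> 'a set \<Rightarrow> 'a set set" where
  "EJ2 E J = {e\<in>edges_minus E J. isolated_edge (edges_minus E J) e}"

definition EJ3 :: "'a set set \<Rightarrow> 'a set \<Rightarrow> 'a set set" where
  "EJ3 E J = {e\<in>E. card (e \<inter> J) = 1}"

definition EJ4 :: "'a set set \<Rightarrow> 'a set \<Rightarrow> 'a set set" where
  "EJ4 E J = {e\<in>E. e \<subseteq> J}"

definition NJ3 :: "'a set set \<Rightarrow> 'a set \<Rightarrow> 'a \<Rightarrow> 'a set" where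
  "NJ3 E J i = {j. {i, j} \<in> EJ3 E J}"

definition private_nb :: "'a set \<Rightarrow> 'a set set \<Rightarrow> 'a set \<Rightarrow> 'a \<Rightarrow> 'a \<Rightarrow> bool" where
  "private_nb V E J i j \<longleftrightarrow> i \<in> V - J \<and> NJ3 E J i = {j}"

definition good_subset :: "'a set \<Rightarrow> 'a set set \<Rightarrow> 'a set \<Rightarrow> bool" where
  "good_subset V E J \<longleftrightarrow>
     J \<subseteq> V \<and> J \<noteq> {} \<and>
     \<comment> \<open>(J1)\<close>
     (\<forall>j\<in>J. deg (EJ4 E J) j \<le> 1) \<and>
     \<comment> \<open>(J2)\<close>
     (\<forall>e\<in>EJ3 E J. \<not> isolated_edge (EJ3 E J) e) \<and>
     \<comment> \<open>(J3)\<close>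
     (\<forall>j\<in>J. card {i. private_nb V E J i j} \<le> 1) \<and>
     \<comment> \<open>(J4)\<close>
     (\<exists>ie. inj_on ie (EJ4 E J) \<and>
        (\<forall>e\<in>EJ4 E J. ie e \<in> V - J \<and> e \<subseteq> NJ3 E J (ie e)
            \<and> (\<forall>j\<in>e. \<not> (\<exists>i. private_nb V E J i j)))) \<and>
     \<comment> \<open>(J5)\<close>
     (\<forall>e\<in>EJ2 E J. \<forall>v\<in>e. \<exists>j\<in>J. {v, j} \<in> E)"

definition walk_edges :: "'a list \<Rightarrow> 'a set set" where
  "walk_edges w = {{a, b} | a b. (a, b) \<in> set (zip w (tl w))}"

definition walk_len :: "'a list \<Rightarrow> nat" where
  "walk_len w = length w - 1"

definition is_walk :: "'a set \<Rightarrow> 'a set set \<Rightarrow> 'a list \<Rightarrow> bool" where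
  "is_walk V E w \<longleftrightarrow> w \<noteq> [] \<and> set w \<subseteq> V \<and>
     (\<forall>i. Suc i < length w \<longrightarrow> {w ! i, w ! Suc i} \<in> E)"

definition is_path :: "'a set \<Rightarrow> 'a set set \<Rightarrow> 'a list \<Rightarrow> bool" where
  "is_path V E p \<longleftrightarrow> is_walk V E p \<and> distinct p"

definition odd_closed_walk :: "'a set \<Rightarrow> 'a set set \<Rightarrow> 'a list \<Rightarrow> bool" where
  "odd_closed_walk V E w \<longleftrightarrow> is_walk V E w \<and> hd w = last w \<and> odd (walk_len w)"

text \<open>E_{J,2}-covering family, indexed by E_{J,2}: C e is an edge (as a subgraph).\<close>
definition EJ2_covering :: "'a set set \<Rightarrow> 'a set \<Rightarrow> ('a set \<Rightarrow> 'a set) \<Rightarrow> bool" where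
  "EJ2_covering E J C \<longleftrightarrow> (\<forall>e\<in>EJ2 E J. C e \<in> EJ3 E J \<and> C e \<inter> e \<noteq> {})"

definition joins :: "'a list \<Rightarrow> 'a \<Rightarrow> 'a \<Rightarrow> bool" where
  "joins p j j' \<longleftrightarrow> {hd p, last p} = {j, j'}"

definition dC :: "'a list multiset \<Rightarrow> 'a \<Rightarrow> nat" where
  "dC C j = size (filter_mset (\<lambda>p. j = hd p \<or> j = last p) C)"

definition EJ3_covering :: "'a set \<Rightarrow> 'a set set \<Rightarrow> 'a set \<Rightarrow> 'a list multiset \<Rightarrow> bool" where
  "EJ3_covering V E J C \<longleftrightarrow>
     (\<forall>p\<in>#C. is_path V E p \<and> hd p \<noteq> last p \<and> hd p \<in> J \<and> last p \<in> J) \<and>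
     (\<forall>j\<in>J. \<forall>j'\<in>J. j \<noteq> j' \<longrightarrow>
        even (size (filter_mset (\<lambda>p. joins p j j' \<and> even (walk_len p)) C)) \<and>
        even (size (filter_mset (\<lambda>p. joins p j j' \<and> odd (walk_len p)) C))) \<and>
     (\<forall>j\<in>J. dC C j \<ge> 2 * deg (EJ3 E J) j)"

definition EJ4_covering :: "'a set \<Rightarrow> 'a set set \<Rightarrow> 'a set \<Rightarrow> ('a set \<Rightarrow> 'a list) \<Rightarrow> bool" where
  "EJ4_covering V E J C \<longleftrightarrow> (\<forall>e\<in>EJ4 E J. odd_closed_walk V E (C e) \<and> e \<in> walk_edges (C e))"

definition J_covering :: "'a set \<Rightarrow> 'a set set \<Rightarrow> 'a set \<Rightarrow>
    ('a set \<Rightarrow> 'a set) \<Rightarrow> 'a list multiset \<Rightarrow> ('a set \<Rightarrow> 'a list) \<Rightarrow> bool" where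
  "J_covering V E J C2 C3 C4 \<longleftrightarrow>
     EJ2_covering E J C2 \<and> EJ3_covering V E J C3 \<and> EJ4_covering V E J C4"

text \<open>K_C(f): number of members (with multiplicity) of the union family whose
  edge set contains f. Each member of C2 is a single edge, of C3 a path,
  of C4 a closed walk (its edge set).\<close>
definition K_cov :: "'a set set \<Rightarrow> 'a set \<Rightarrow>
    ('a set \<Rightarrow> 'a set) \<Rightarrow> 'a list multiset \<Rightarrow> ('a set \<Rightarrow> 'a list) \<Rightarrow> 'a set \<Rightarrow> nat" where
  "K_cov E J C2 C3 C4 f =
     card {e\<in>EJ2 E J. C2 e = f}
     + size (filter_mset (\<lambda>p. f \<in> walk_edges p) C3)
     + card {e\<in>EJ4 E J. f \<in> walk_edges (C4 e)}"

end

theory Submission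
  imports Defs
begin

text \<open>Around each vertex i outside J with J-neighbours x_0, ..., x_{k-1} take the k cherries
  x_t i x_{t+1} (indices mod k): twice in general, once if k = 2 and i is the apex i_e of an edge
  e of E_{J,4} (the two cherries then join the same ends), and not at all if k < 2. All of them
  have length 2 and each pair of ends is joined an even number of times. Every J-vertex is an end
  of two cherries per copy at each of its neighbours outside J; a private neighbour contributes
  nothing, but by (J3) and (J2) the remaining neighbours make up for it. An edge e of E_{J,4} is
  covered by the triangle through i_e, an isolated edge of G - J by an edge from one of its ends
  into J, and edges of E_{J,1} are used by none of these. An edge i j with i outside J lies on
  at most four cherries, on at most one triangle and is chosen for at most one isolated edge;
  choosing the latter off triangles whose apex has three or more J-neighbours avoids 4 + 1 + 1.\<close>

lemma filter_mset_repeat_mset: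
  "filter_mset P (repeat_mset n M) = repeat_mset n (filter_mset P M)"
  by (induction n) auto

lemma filter_mset_sum:
  "finite A \<Longrightarrow> filter_mset P (\<Sum>x\<in>A. f x) = (\<Sum>x\<in>A. filter_mset P (f x))"
  by (induction A rule: finite_induct) auto

lemma card_cyclic_neighbours_of:
  assumes "distinct xs" "2 \<le> length xs"
  shows "card {t. t < length xs \<and> (xs ! t = j \<or> xs ! (Suc t mod length xs) = j)}
           = (if j \<in> set xs then 2 else 0)"
proof (cases "j \<in> set xs")
  case True
  let ?k = "length xs"
  obtain p where p: "p < ?k" "xs ! p = j" using True by (auto simp: in_set_conv_nth)
  define q where "q = (if p = 0 then ?k - 1 else p - 1)"
  have "{t. t < ?k \<and> (xs ! t = j \<or> xs ! (Suc t mod ?k) = j)} = {p, q}"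
  proof -
    have at_p: "s < ?k \<Longrightarrow> xs ! s = j \<longleftrightarrow> s = p" for s
      using p assms(1) by (auto simp: nth_eq_iff_index_eq)
    have at_q: "t < ?k \<Longrightarrow> xs ! (Suc t mod ?k) = j \<longleftrightarrow> t = q" for t
    proof -
      have "Suc t mod ?k < ?k" using assms(2) by (intro mod_less_divisor) linarith
      moreover assume "t < ?k"
      then have "Suc t mod ?k = p \<longleftrightarrow> t = q" using p by (auto simp: mod_Suc q_def)
      ultimately show ?thesis using at_p by blast
    qed
    have "q < ?k" using p(1) by (auto simp: q_def)
    with p(1) show ?thesis using at_p at_q by blast
  qed
  moreover have "p \<noteq> q" using assms(2) p by (auto simp: q_def)
  ultimately show ?thesis using True by simp
next
  case False
  have "0 < length xs" using assms(2) by linarith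
  then have "xs ! (Suc t mod length xs) \<in> set xs" for t by simp
  with False show ?thesis by (auto simp: nth_mem)
qed

definition cherries :: "'a \<Rightarrow> 'a list \<Rightarrow> 'a list multiset" where
  "cherries i xs = mset (map (\<lambda>t. [xs ! t, i, xs ! (Suc t mod length xs)]) [0..<length xs])"

lemma size_filter_cherries:
  "size (filter_mset P (cherries i xs)) =
     card {t. t < length xs \<and> P [xs ! t, i, xs ! (Suc t mod length xs)]}"
  unfolding cherries_def mset_filter[symmetric] size_mset length_filter_conv_card
  by (rule arg_cong[where f = card]) auto

lemma mem_cherries:
  assumes "distinct xs" "2 \<le> length xs" "p \<in># cherries i xs"
  shows "\<exists>x y. p = [x, i, y] \<and> x \<in> set xs \<and> y \<in> set xs \<and> x \<noteq> y"
proof -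
  obtain t where t: "t < length xs" "p = [xs ! t, i, xs ! (Suc t mod length xs)]"
    using assms(3) by (auto simp: cherries_def)
  have "Suc t mod length xs < length xs" using assms(2) by (intro mod_less_divisor) linarith
  moreover have "Suc t mod length xs \<noteq> t" using t(1) assms(2) by (auto simp: mod_Suc)
  ultimately show ?thesis using t assms(1) by (auto simp: nth_eq_iff_index_eq)
qed

lemma size_filter_cherries_ending_at:
  assumes "distinct xs" "2 \<le> length xs"
  shows "size (filter_mset (\<lambda>p. j = hd p \<or> j = last p) (cherries i xs))
           = (if j \<in> set xs then 2 else 0)"
  unfolding size_filter_cherries card_cyclic_neighbours_of[OF assms, symmetric]
  by (rule arg_cong[where f = card]) auto

lemma walk_edges_cherry: "walk_edges [x, i, y] = {{x, i}, {i, y}}"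
  by (auto simp: walk_edges_def)

lemma size_filter_cherries_through:
  assumes "distinct xs" "2 \<le> length xs" "j \<noteq> i"
  shows "size (filter_mset (\<lambda>p. {i, j} \<in> walk_edges p) (cherries i xs))
           = (if j \<in> set xs then 2 else 0)"
  unfolding size_filter_cherries card_cyclic_neighbours_of[OF assms(1,2), symmetric]
  using assms(3) by (intro arg_cong[where f = card]) (auto simp: walk_edges_cherry doubleton_eq_iff)

lemma filter_cherries_avoiding:
  "i \<notin> f \<Longrightarrow> filter_mset (\<lambda>p. f \<in> walk_edges p) (cherries i xs) = {#}"
  by (auto simp: cherries_def walk_edges_cherry)

lemma cherries_of_pair: "cherries i [a, b] = {#[a, i, b], [b, i, a]#}"
  by (simp add: cherries_def upt_rec)

lemma even_size_filter_joins_cherries_pair: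
  assumes "length xs = 2"
  shows "even (size (filter_mset (\<lambda>p. joins p j j') (cherries i xs)))"
proof -
  obtain a b where "xs = [a, b]" using assms by (auto simp: numeral_2_eq_2 length_Suc_conv)
  then show ?thesis by (simp add: cherries_of_pair joins_def insert_commute)
qed

lemma walk_edges_triangle: "walk_edges [a, b, c, a] = {{a, b}, {b, c}, {c, a}}"
  by (auto simp: walk_edges_def)

lemma is_path_cherry:
  "{x, i} \<in> E \<Longrightarrow> {i, y} \<in> E \<Longrightarrow> distinct [x, i, y] \<Longrightarrow> set [x, i, y] \<subseteq> V
    \<Longrightarrow> is_path V E [x, i, y]"
  by (auto simp: is_path_def is_walk_def less_Suc_eq nth_Cons')

lemma odd_closed_walk_triangle:
  "{a, b} \<in> E \<Longrightarrow> {b, c} \<in> E \<Longrightarrow> {c, a} \<in> E \<Longrightarrow> {a, b, c} \<subseteq> V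
    \<Longrightarrow> odd_closed_walk V E [a, b, c, a]"
  by (auto simp: odd_closed_walk_def is_walk_def walk_len_def less_Suc_eq nth_Cons')

lemma isolated_edge_unique:
  assumes "isolated_edge F e" "e' \<in> F" "v \<in> e" "v \<in> e'"
  shows "e' = e"
proof -
  have "card {d \<in> F. v \<in> d} = 1" using assms(1,3) by (simp add: isolated_edge_def deg_def)
  moreover have "e \<in> {d \<in> F. v \<in> d}" "e' \<in> {d \<in> F. v \<in> d}"
    using assms by (auto simp: isolated_edge_def)
  ultimately show ?thesis by (metis card_1_singletonE singletonD)
qed

lemma mem_NJ3_iff: "i \<notin> J \<Longrightarrow> j \<in> NJ3 E J i \<longleftrightarrow> j \<in> J \<and> {i, j} \<in> E"
proof -
  assume "i \<notin> J"
  then have "{i, j} \<inter> J = (if j \<in> J then {j} else {})" by auto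
  then show ?thesis by (simp add: NJ3_def EJ3_def)
qed

lemma deg_eq_card_neighbours:
  assumes "\<forall>e\<in>F. card e = 2"
  shows "deg F v = card {u. {v, u} \<in> F}"
proof -
  have "{e \<in> F. v \<in> e} = (\<lambda>u. {v, u}) ` {u. {v, u} \<in> F}"
  proof (intro equalityI subsetI)
    fix e assume e: "e \<in> {e \<in> F. v \<in> e}"
    then obtain x y where "e = {x, y}" using assms by (metis (no_types, lifting) card_2_iff mem_Collect_eq)
    with e have "e = {v, if v = x then y else x}" by auto
    with e show "e \<in> (\<lambda>u. {v, u}) ` {u. {v, u} \<in> F}" by blast
  qed auto
  moreover have "inj_on (\<lambda>u. {v, u}) {u. {v, u} \<in> F}" by (auto simp: inj_on_def doubleton_eq_iff)
  ultimately show ?thesis by (simp add: deg_def card_image)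
qed

lemma EJ3_edgeE:
  assumes "simple_graph V E" "f \<in> EJ3 E J"
  obtains i j where "f = {i, j}" "i \<in> V - J" "j \<in> J"
proof -
  have f: "f \<in> E" "card (f \<inter> J) = 1" using assms(2) by (auto simp: EJ3_def)
  then have "f \<subseteq> V" "card f = 2" using assms(1) by (auto simp: simple_graph_def)
  moreover obtain j where j: "f \<inter> J = {j}" using f(2) by (auto simp: card_1_singleton_iff)
  moreover from j have "j \<in> f" by blast
  ultimately have "card (f - {j}) = 1" by (simp add: card_Diff_singleton)
  then obtain i where "f - {j} = {i}" by (rule card_1_singletonE)
  with j have "f = {i, j}" "i \<notin> J" "j \<in> J" by auto
  moreover have "i \<in> V" using \<open>f \<subseteq> V\<close> calculation(1) by blast
  ultimately show thesis using that by blast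
qed

lemma two_le_card:
  assumes "finite A" "x \<in> A" "A \<noteq> {x}"
  shows "2 \<le> card A"
proof -
  obtain y where "y \<in> A" "y \<noteq> x" using assms(2,3) by blast
  then have "card {x, y} \<le> card A" using assms(1,2) by (intro card_mono) auto
  with \<open>y \<noteq> x\<close> show ?thesis by simp
qed

lemma card_fibre_le_1:
  assumes "inj_on g A"
  shows "card {x \<in> A. g x = y} \<le> 1"
proof (cases "finite {x \<in> A. g x = y}")
  case True
  with assms show ?thesis by (auto simp: card_le_Suc0_iff_eq inj_on_def)
qed simp

locale good_subset_graph =
  fixes V :: "'a set" and E :: "'a set set" and J :: "'a set" and apex :: "'a set \<Rightarrow> 'a"
  assumes nice: "nice V E" and good: "good_subset V E J"
    and apex_inj: "inj_on apex (EJ4 E J)"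
    and apex: "\<And>e. e \<in> EJ4 E J \<Longrightarrow> apex e \<in> V - J \<and> e \<subseteq> NJ3 E J (apex e)
                 \<and> (\<forall>j\<in>e. \<not> (\<exists>i. private_nb V E J i j))"
begin

abbreviation N :: "'a \<Rightarrow> 'a set" where
  "N i \<equiv> NJ3 E J i"

lemma simple: "simple_graph V E"
  using nice by (simp add: nice_def)

lemma edge: "e \<in> E \<Longrightarrow> e \<subseteq> V \<and> card e = 2"
  using simple by (simp add: simple_graph_def)

lemma finite_V: "finite V"
  using simple by (simp add: simple_graph_def)

lemma finite_E: "finite E"
proof (rule finite_subset)
  show "E \<subseteq> Pow V" using edge by blast
qed (simp add: finite_V)

lemma N_subset: "i \<notin> J \<Longrightarrow> N i \<subseteq> J \<inter> V"
  by (force simp: mem_NJ3_iff dest: edge)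

lemma finite_N: "i \<notin> J \<Longrightarrow> finite (N i)"
  using N_subset finite_V by (meson finite_Int finite_subset)

lemma EJ4_edge: "e \<in> EJ4 E J \<Longrightarrow> e \<in> E \<and> e \<subseteq> J \<and> card e = 2"
  using edge by (simp add: EJ4_def)

lemma deg_EJ3_outside: "i \<notin> J \<Longrightarrow> deg (EJ3 E J) i = card (N i)"
  using edge by (subst deg_eq_card_neighbours) (auto simp: EJ3_def NJ3_def)

lemma deg_EJ3_inside:
  assumes "j \<in> J"
  shows "deg (EJ3 E J) j = card {i \<in> V - J. j \<in> N i}"
proof -
  have "{u. {j, u} \<in> EJ3 E J} = {i \<in> V - J. j \<in> N i}"
  proof (intro equalityI subsetI)
    fix u assume "u \<in> {u. {j, u} \<in> EJ3 E J}"
    then obtain i j' where "{j, u} = {i, j'}" "i \<in> V - J" "j' \<in> J" "{j, u} \<in> EJ3 E J"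
      using simple by (auto elim: EJ3_edgeE)
    with assms show "u \<in> {i \<in> V - J. j \<in> N i}"
      by (auto simp: NJ3_def doubleton_eq_iff insert_commute)
  qed (auto simp: NJ3_def insert_commute)
  then show ?thesis
    using edge by (subst deg_eq_card_neighbours) (auto simp: EJ3_def)
qed

definition apex_edges :: "'a set \<Rightarrow> 'a set set" where
  "apex_edges e = (\<lambda>x. {x, apex e}) ` e"

lemma apex_edges_EJ3: "e \<in> EJ4 E J \<Longrightarrow> apex_edges e \<subseteq> EJ3 E J"
  using apex by (fastforce simp: apex_edges_def NJ3_def insert_commute)

lemma triangle_over_EJ4_edge:
  assumes "e \<in> EJ4 E J"
  shows "\<exists>w. odd_closed_walk V E w \<and> e \<in> walk_edges w \<and> walk_edges w \<subseteq> insert e (apex_edges e)"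
proof -
  obtain a b where ab: "e = {a, b}" using assms EJ4_edge by (meson card_2_iff)
  have "{apex e, a} \<in> E" "{apex e, b} \<in> E" "apex e \<notin> J"
    using apex[OF assms] ab by (auto simp: mem_NJ3_iff)
  moreover have "e \<in> E" using assms EJ4_edge by blast
  ultimately have "odd_closed_walk V E [a, b, apex e, a]"
    using ab edge by (intro odd_closed_walk_triangle) (auto simp: insert_commute)
  moreover have "walk_edges [a, b, apex e, a] = {e, {b, apex e}, {apex e, a}}"
    using ab walk_edges_triangle by simp
  ultimately show ?thesis
    using ab by (intro exI[of _ "[a, b, apex e, a]"]) (auto simp: apex_edges_def insert_commute)
qed

text \<open>Besides meeting e, the chosen edge avoids the spokes of every triangle whose apex has at
  least three neighbours in J; there the edge is already used four times by the cherries.\<close>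

lemma EJ2_cover_edge_exists:
  assumes "e \<in> EJ2 E J"
  shows "\<exists>c \<in> EJ3 E J. c \<inter> e \<noteq> {} \<and>
           (\<forall>e' \<in> EJ4 E J. 3 \<le> card (N (apex e')) \<longrightarrow> c \<notin> apex_edges e')"
proof -
  have e: "e \<in> E" "e \<inter> J = {}" using assms by (auto simp: EJ2_def edges_minus_def)
  have "e \<noteq> {}" using edge[OF e(1)] by auto
  then obtain v where v: "v \<in> e" by blast
  with e have "v \<notin> J" by blast
  obtain j where j: "j \<in> N v" "\<forall>e' \<in> EJ4 E J. apex e' = v \<longrightarrow> 3 \<le> card (N v) \<longrightarrow> j \<notin> e'"
  proof (cases "\<exists>e' \<in> EJ4 E J. apex e' = v \<and> 3 \<le> card (N v)")
    case True
    then obtain e' where e': "e' \<in> EJ4 E J" "apex e' = v" "3 \<le> card (N v)" by blast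
    have "card e' = 2" using EJ4_edge[OF e'(1)] by blast
    then have "finite e'" by (metis card.infinite zero_neq_numeral)
    have "\<not> N v \<subseteq> e'"
    proof
      assume "N v \<subseteq> e'"
      with \<open>finite e'\<close> have "card (N v) \<le> card e'" by (rule card_mono)
      with e'(3) \<open>card e' = 2\<close> show False by simp
    qed
    then obtain j where "j \<in> N v" "j \<notin> e'" by blast
    moreover have "e'' = e'" if "e'' \<in> EJ4 E J" "apex e'' = v" for e''
      using that e' inj_onD[OF apex_inj] by metis
    ultimately show thesis using that by blast
  next
    case False
    have "\<forall>e \<in> EJ2 E J. \<forall>v \<in> e. \<exists>j \<in> J. {v, j} \<in> E"
      using good by (simp add: good_subset_def)
    with assms v obtain j where "j \<in> J" "{v, j} \<in> E" by blast
    with \<open>v \<notin> J\<close> have "j \<in> N v" by (simp add: mem_NJ3_iff)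
    with False show thesis using that by blast
  qed
  have "{v, j} \<in> EJ3 E J" using j(1) by (simp add: NJ3_def)
  moreover have "{v, j} \<notin> apex_edges e'" if "e' \<in> EJ4 E J" "3 \<le> card (N (apex e'))" for e'
  proof
    assume "{v, j} \<in> apex_edges e'"
    then obtain x where "x \<in> e'" "{v, j} = {x, apex e'}" by (auto simp: apex_edges_def)
    moreover have "x \<in> J" using \<open>x \<in> e'\<close> that(1) EJ4_edge by blast
    with \<open>v \<notin> J\<close> have "v \<noteq> x" by blast
    with \<open>{v, j} = {x, apex e'}\<close> have "apex e' = v" "j = x" by (auto simp: doubleton_eq_iff)
    with \<open>x \<in> e'\<close> that have "j \<in> e'" "3 \<le> card (N v)" by simp_all
    with j(2) that(1) \<open>apex e' = v\<close> show False by blast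
  qed
  ultimately show ?thesis using v by (intro bexI[of _ "{v, j}"]) auto
qed

end

lemma good_subset_graph_exists:
  assumes "nice V E" "good_subset V E J"
  shows "\<exists>apex. good_subset_graph V E J apex"
proof -
  have "\<exists>apex. inj_on apex (EJ4 E J) \<and> (\<forall>e\<in>EJ4 E J. apex e \<in> V - J \<and>
          e \<subseteq> NJ3 E J (apex e) \<and> (\<forall>j\<in>e. \<not> (\<exists>i. private_nb V E J i j)))"
    using assms(2) unfolding good_subset_def by (elim conjE)
  then obtain apex where "inj_on apex (EJ4 E J)" "\<forall>e\<in>EJ4 E J. apex e \<in> V - J \<and>
      e \<subseteq> NJ3 E J (apex e) \<and> (\<forall>j\<in>e. \<not> (\<exists>i. private_nb V E J i j))"
    by blast
  with assms have "good_subset_graph V E J apex" by unfold_locales blast+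
  then show ?thesis by blast
qed

locale J_cover_construction = good_subset_graph +
  fixes nbrs :: "'a \<Rightarrow> 'a list" and C2 :: "'a set \<Rightarrow> 'a set" and C4 :: "'a set \<Rightarrow> 'a list"
  assumes nbrs: "\<And>i. i \<in> V - J \<Longrightarrow> set (nbrs i) = N i \<and> distinct (nbrs i)"
    and C2: "\<And>e. e \<in> EJ2 E J \<Longrightarrow> C2 e \<in> EJ3 E J \<and> C2 e \<inter> e \<noteq> {} \<and>
               (\<forall>e' \<in> EJ4 E J. 3 \<le> card (N (apex e')) \<longrightarrow> C2 e \<notin> apex_edges e')"
    and C4: "\<And>e. e \<in> EJ4 E J \<Longrightarrow> odd_closed_walk V E (C4 e) \<and> e \<in> walk_edges (C4 e) \<and>
               walk_edges (C4 e) \<subseteq> insert e (apex_edges e)"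
begin

text \<open>At an apex with exactly two neighbours in J the two cherries join the same pair, so a
  single copy already has the parity required, and a second copy would overload the spokes,
  which also lie on the triangle.\<close>

definition cherry_mult :: "'a \<Rightarrow> nat" where
  "cherry_mult i =
     (if card (N i) < 2 then 0 else if card (N i) = 2 \<and> i \<in> apex ` EJ4 E J then 1 else 2)"

definition C3 :: "'a list multiset" where
  "C3 = (\<Sum>i \<in> V - J. repeat_mset (cherry_mult i) (cherries i (nbrs i)))"

lemma length_nbrs: "i \<in> V - J \<Longrightarrow> length (nbrs i) = card (N i)"
  using nbrs by (metis distinct_card)

lemma size_filter_C3:
  "size (filter_mset P C3) =
     (\<Sum>i \<in> V - J. cherry_mult i * size (filter_mset P (cherries i (nbrs i))))"
  using finite_V by (simp add: C3_def filter_mset_sum filter_mset_repeat_mset)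

lemma mem_C3:
  assumes "p \<in># C3"
  obtains i x y where "i \<in> V - J" "p = [x, i, y]" "x \<in> N i" "y \<in> N i" "x \<noteq> y"
proof -
  obtain i where i: "i \<in> V - J" "p \<in># repeat_mset (cherry_mult i) (cherries i (nbrs i))"
    using assms finite_V by (auto simp: C3_def set_mset_sum)
  then have "cherry_mult i \<noteq> 0" "p \<in># cherries i (nbrs i)"
    by (metis count_greater_zero_iff count_repeat_mset mult_is_0 neq0_conv)+
  moreover from this(1) have "2 \<le> length (nbrs i)"
    using i(1) by (auto simp: cherry_mult_def length_nbrs split: if_splits)
  ultimately show thesis
    using mem_cherries[of "nbrs i"] nbrs[OF i(1)] i(1) that by metis
qed

lemma C3_paths:
  assumes "p \<in># C3"
  shows "is_path V E p \<and> hd p \<noteq> last p \<and> hd p \<in> J \<and> last p \<in> J"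
proof -
  obtain i x y where "i \<in> V - J" "p = [x, i, y]" "x \<in> N i" "y \<in> N i" "x \<noteq> y"
    using assms by (rule mem_C3)
  moreover from this have "x \<in> J \<inter> V" "y \<in> J \<inter> V" using N_subset by blast+
  moreover from calculation have "{x, i} \<in> E" "{i, y} \<in> E"
    by (auto simp: mem_NJ3_iff insert_commute)
  ultimately show ?thesis by (auto intro: is_path_cherry)
qed

lemma walk_len_C3: "p \<in># C3 \<Longrightarrow> walk_len p = 2"
  by (erule mem_C3) (simp add: walk_len_def)

lemma walk_edges_C3: "p \<in># C3 \<Longrightarrow> walk_edges p \<subseteq> EJ3 E J"
  by (erule mem_C3) (auto simp: walk_edges_cherry NJ3_def insert_commute)

lemma even_size_filter_C3_joins:
  "even (size (filter_mset (\<lambda>p. joins p j j' \<and> even (walk_len p)) C3))"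
  "even (size (filter_mset (\<lambda>p. joins p j j' \<and> odd (walk_len p)) C3))"
proof -
  have joins_only:
    "filter_mset (\<lambda>p. joins p j j' \<and> even (walk_len p)) C3 = filter_mset (\<lambda>p. joins p j j') C3"
    using walk_len_C3 by (intro filter_mset_cong0) simp
  have "even (cherry_mult i * size (filter_mset (\<lambda>p. joins p j j') (cherries i (nbrs i))))"
    if "i \<in> V - J" for i
  proof (cases "cherry_mult i = 1")
    case True
    then have "length (nbrs i) = 2"
      using that by (auto simp: cherry_mult_def length_nbrs split: if_splits)
    then show ?thesis by (simp add: even_size_filter_joins_cherries_pair)
  qed (auto simp: cherry_mult_def)
  then show "even (size (filter_mset (\<lambda>p. joins p j j' \<and> even (walk_len p)) C3))"
    unfolding joins_only size_filter_C3 by (rule dvd_sum)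
  have no_odd: "filter_mset (\<lambda>p. joins p j j' \<and> odd (walk_len p)) C3 = {#}"
    by (auto dest: walk_len_C3)
  show "even (size (filter_mset (\<lambda>p. joins p j j' \<and> odd (walk_len p)) C3))"
    unfolding no_odd by simp
qed

lemma dC_C3: "dC C3 j = 2 * (\<Sum>i \<in> {i \<in> V - J. j \<in> N i}. cherry_mult i)"
proof -
  have "cherry_mult i * size (filter_mset (\<lambda>p. j = hd p \<or> j = last p) (cherries i (nbrs i)))
          = (if j \<in> N i then 2 * cherry_mult i else 0)" if "i \<in> V - J" for i
  proof (cases "cherry_mult i = 0")
    case False
    then have "2 \<le> length (nbrs i)"
      using that by (auto simp: cherry_mult_def length_nbrs split: if_splits)
    with nbrs[OF that] show ?thesis by (simp add: size_filter_cherries_ending_at)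
  qed simp
  then have "dC C3 j = (\<Sum>i \<in> V - J. 2 * (if j \<in> N i then cherry_mult i else 0))"
    unfolding dC_def size_filter_C3 by (intro sum.cong) simp_all
  also have "\<dots> = 2 * (\<Sum>i \<in> V - J. if j \<in> N i then cherry_mult i else 0)"
    by (simp add: sum_distrib_left)
  also have "(\<Sum>i \<in> V - J. if j \<in> N i then cherry_mult i else 0)
               = (\<Sum>i \<in> {i \<in> V - J. j \<in> N i}. cherry_mult i)"
    using finite_V by (intro sum.inter_filter[symmetric]) simp
  finally show ?thesis .
qed

lemma private_nb_unique:
  assumes "j \<in> J" "private_nb V E J p j" "private_nb V E J i j"
  shows "i = p"
proof -
  have "card {i. private_nb V E J i j} \<le> 1" using good assms(1) by (simp add: good_subset_def)
  moreover have "finite {i. private_nb V E J i j}"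
    using finite_V by (rule finite_subset[rotated]) (auto simp: private_nb_def)
  ultimately show ?thesis using assms(2,3) by (auto simp: card_le_Suc0_iff_eq)
qed

lemma two_le_card_N:
  assumes "i \<in> V - J" "j \<in> N i" "\<not> private_nb V E J i j"
  shows "2 \<le> card (N i)"
  using assms finite_N by (intro two_le_card) (auto simp: private_nb_def)

lemma cherry_mult_beside_private_nb:
  assumes "i \<in> V - J" "j \<in> N i" "private_nb V E J p j" "i \<noteq> p"
  shows "cherry_mult i = 2"
proof -
  have "j \<in> J" using assms(1,2) N_subset by blast
  with assms(3,4) have "\<not> private_nb V E J i j" using private_nb_unique by blast
  with assms(1,2) have two: "2 \<le> card (N i)" by (rule two_le_card_N)
  have "\<not> (card (N i) = 2 \<and> i \<in> apex ` EJ4 E J)"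
  proof
    assume "card (N i) = 2 \<and> i \<in> apex ` EJ4 E J"
    then obtain e where e: "e \<in> EJ4 E J" "apex e = i" "card (N i) = 2" by blast
    then have "e \<subseteq> N i" "card e = 2" using apex EJ4_edge by auto
    with e(3) have "e = N i" using finite_N[of i] assms(1) by (intro card_subset_eq) simp_all
    with assms(2) have "j \<in> e" by simp
    with apex[OF e(1)] assms(3) show False by blast
  qed
  with two show ?thesis by (simp add: cherry_mult_def)
qed

lemma card_le_sum_cherry_mult:
  assumes "j \<in> J"
  shows "card {i \<in> V - J. j \<in> N i} \<le> (\<Sum>i \<in> {i \<in> V - J. j \<in> N i}. cherry_mult i)"
    (is "card ?A \<le> sum cherry_mult ?A")
proof (cases "\<exists>p. private_nb V E J p j")
  case False
  then have "1 \<le> cherry_mult i" if "i \<in> ?A" for i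
    using that two_le_card_N[of i j] by (auto simp: cherry_mult_def)
  then have "(\<Sum>i \<in> ?A. 1) \<le> sum cherry_mult ?A" by (rule sum_mono)
  then show ?thesis by simp
next
  case True
  then obtain p where p: "private_nb V E J p j" by blast
  then have "p \<in> ?A" "N p = {j}" by (auto simp: private_nb_def)
  have fin: "finite ?A" using finite_V by simp
  \<comment> \<open>by (J2) the edge p j is not isolated, so j has a neighbour besides p\<close>
  have "{p, j} \<in> EJ3 E J" using \<open>N p = {j}\<close> by (auto simp: NJ3_def)
  moreover have "deg (EJ3 E J) p = 1" using \<open>p \<in> ?A\<close> \<open>N p = {j}\<close> deg_EJ3_outside by simp
  moreover have "\<not> isolated_edge (EJ3 E J) {p, j}" using good calculation(1) by (simp add: good_subset_def)
  ultimately have "card ?A \<noteq> 1" using deg_EJ3_inside[OF assms] by (auto simp: isolated_edge_def)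
  moreover have "card ?A \<noteq> 0" using fin \<open>p \<in> ?A\<close> by auto
  ultimately have two: "2 \<le> card ?A" by linarith
  have "sum cherry_mult ?A = cherry_mult p + sum cherry_mult (?A - {p})"
    using fin \<open>p \<in> ?A\<close> by (rule sum.remove)
  also have "sum cherry_mult (?A - {p}) = (\<Sum>i \<in> ?A - {p}. 2)"
    by (rule sum.cong) (auto intro: cherry_mult_beside_private_nb[OF _ _ p])
  finally have "sum cherry_mult ?A \<ge> 2 * (card ?A - 1)"
    using fin \<open>p \<in> ?A\<close> by simp
  with two show ?thesis by linarith
qed

lemma EJ3_covering_C3: "EJ3_covering V E J C3"
proof -
  have "2 * deg (EJ3 E J) j \<le> dC C3 j" if "j \<in> J" for j
    using card_le_sum_cherry_mult[OF that] by (simp add: dC_C3 deg_EJ3_inside[OF that])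
  then show ?thesis
    unfolding EJ3_covering_def using C3_paths even_size_filter_C3_joins by blast
qed

lemma size_filter_C3_through_spoke:
  assumes "i0 \<in> V - J" "j \<in> J"
  shows "size (filter_mset (\<lambda>p. {i0, j} \<in> walk_edges p) C3) \<le> 2 * cherry_mult i0"
proof -
  have "cherry_mult i * size (filter_mset (\<lambda>p. {i0, j} \<in> walk_edges p) (cherries i (nbrs i)))
          \<le> (if i = i0 then 2 * cherry_mult i0 else 0)" if "i \<in> V - J" for i
  proof (cases "i = i0")
    case True
    show ?thesis
    proof (cases "cherry_mult i = 0")
      case False
      then have "2 \<le> length (nbrs i)"
        using that by (auto simp: cherry_mult_def length_nbrs split: if_splits)
      moreover have "j \<noteq> i0" using assms by blast
      ultimately show ?thesis
        using True nbrs[OF that] by (simp add: size_filter_cherries_through)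
    qed simp
  next
    case False
    with that assms(2) have "i \<notin> {i0, j}" by blast
    then show ?thesis using False by (simp add: filter_cherries_avoiding)
  qed
  then have "size (filter_mset (\<lambda>p. {i0, j} \<in> walk_edges p) C3)
               \<le> (\<Sum>i \<in> V - J. if i = i0 then 2 * cherry_mult i0 else 0)"
    unfolding size_filter_C3 by (rule sum_mono)
  also have "\<dots> = 2 * cherry_mult i0" using assms(1) finite_V by simp
  finally show ?thesis .
qed

lemma inj_on_C2: "inj_on C2 (EJ2 E J)"
proof (rule inj_onI)
  fix e1 e2 assume e: "e1 \<in> EJ2 E J" "e2 \<in> EJ2 E J" "C2 e1 = C2 e2"
  have "C2 e1 \<in> EJ3 E J" using C2 e(1) by blast
  with simple obtain i j where ij: "C2 e1 = {i, j}" "i \<in> V - J" "j \<in> J" by (rule EJ3_edgeE)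
  have "i \<in> e" if "e \<in> EJ2 E J" "C2 e = {i, j}" for e
  proof -
    have "C2 e \<inter> e \<noteq> {}" using C2 that(1) by blast
    then obtain x where "x \<in> C2 e" "x \<in> e" by blast
    moreover have "x \<notin> J" using that(1) \<open>x \<in> e\<close> by (auto simp: EJ2_def edges_minus_def)
    ultimately show ?thesis using that(2) ij(3) by auto
  qed
  with e ij(1) have "i \<in> e1" "i \<in> e2" by simp_all
  moreover have "isolated_edge (edges_minus E J) e1" "e2 \<in> edges_minus E J"
    using e(1,2) by (auto simp: EJ2_def)
  ultimately have "e2 = e1" by (intro isolated_edge_unique)
  then show "e1 = e2" ..
qed

lemma C4_edge_unique:
  assumes "e1 \<in> EJ4 E J" "e2 \<in> EJ4 E J" "f \<in> walk_edges (C4 e1)" "f \<in> walk_edges (C4 e2)"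
  shows "e1 = e2"
proof -
  have f: "f \<in> insert e1 (apex_edges e1)" "f \<in> insert e2 (apex_edges e2)" using C4 assms by blast+
  show ?thesis
  proof (cases "f \<subseteq> J")
    case True
    moreover have "apex e1 \<notin> J" "apex e2 \<notin> J" using apex assms(1,2) by blast+
    ultimately have "f \<notin> apex_edges e1" "f \<notin> apex_edges e2" by (auto simp: apex_edges_def)
    with f show ?thesis by simp
  next
    case False
    then have "f \<noteq> e1" "f \<noteq> e2" using EJ4_edge assms(1,2) by blast+
    with f obtain x1 x2 where x: "x1 \<in> e1" "f = {x1, apex e1}" "x2 \<in> e2" "f = {x2, apex e2}"
      by (auto simp: apex_edges_def)
    then have "x2 \<noteq> apex e1" "x2 \<noteq> apex e2" using apex EJ4_edge assms(1,2) by blast+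
    with x have "apex e1 = apex e2" by (auto simp: doubleton_eq_iff)
    then show ?thesis using apex_inj assms(1,2) by (meson inj_onD)
  qed
qed

lemma card_C4_through: "card {e \<in> EJ4 E J. f \<in> walk_edges (C4 e)} \<le> 1"
proof -
  have "finite (EJ4 E J)" using finite_E by (simp add: EJ4_def)
  then show ?thesis using C4_edge_unique by (auto simp: card_le_Suc0_iff_eq)
qed

lemma spoke_of_triangle_avoided_by_C2:
  assumes "i0 \<in> V - J" "j \<in> J" "cherry_mult i0 = 2"
    and "e \<in> EJ4 E J" "{i0, j} \<in> walk_edges (C4 e)" "e2 \<in> EJ2 E J"
  shows "C2 e2 \<noteq> {i0, j}"
proof -
  have "{i0, j} \<noteq> e" using assms(1,4) EJ4_edge by blast
  then have spoke: "{i0, j} \<in> apex_edges e" using C4 assms(4,5) by blast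
  then obtain x where "x \<in> e" "{i0, j} = {x, apex e}" by (auto simp: apex_edges_def)
  moreover have "x \<noteq> i0" using \<open>x \<in> e\<close> assms(1,4) EJ4_edge by blast
  ultimately have "apex e = i0" by (auto simp: doubleton_eq_iff)
  with assms(3,4) have "3 \<le> card (N (apex e))" by (auto simp: cherry_mult_def split: if_splits)
  with assms(4,6) C2 have "C2 e2 \<notin> apex_edges e" by blast
  with spoke show ?thesis by metis
qed

lemma K_cov_outside_EJ3_EJ4:
  assumes "f \<notin> EJ3 E J" "f \<notin> EJ4 E J"
  shows "K_cov E J C2 C3 C4 f = 0"
proof -
  have no_C2: "{e \<in> EJ2 E J. C2 e = f} = {}" using C2 assms(1) by blast
  have no_C3: "filter_mset (\<lambda>p. f \<in> walk_edges p) C3 = {#}" using walk_edges_C3 assms(1) by auto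
  have no_C4: "{e \<in> EJ4 E J. f \<in> walk_edges (C4 e)} = {}" using C4 apex_edges_EJ3 assms by blast
  show ?thesis unfolding K_cov_def no_C2 no_C3 no_C4 by simp
qed

lemma K_cov_le_5: "K_cov E J C2 C3 C4 f \<le> 5"
proof -
  have c2: "card {e \<in> EJ2 E J. C2 e = f} \<le> 1" using inj_on_C2 by (rule card_fibre_le_1)
  have c4: "card {e \<in> EJ4 E J. f \<in> walk_edges (C4 e)} \<le> 1" by (rule card_C4_through)
  show ?thesis
  proof (cases "f \<in> EJ3 E J")
    case False
    then have no_C3: "filter_mset (\<lambda>p. f \<in> walk_edges p) C3 = {#}" using walk_edges_C3 by auto
    from c2 c4 show ?thesis unfolding K_cov_def no_C3 by simp
  next
    case True
    with simple obtain i0 j where f: "f = {i0, j}" "i0 \<in> V - J" "j \<in> J" by (rule EJ3_edgeE)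
    then have c3: "size (filter_mset (\<lambda>p. f \<in> walk_edges p) C3) \<le> 2 * cherry_mult i0"
      using size_filter_C3_through_spoke by blast
    have "cherry_mult i0 \<le> 2" by (simp add: cherry_mult_def)
    then consider "cherry_mult i0 \<le> 1" | "cherry_mult i0 = 2" by linarith
    then show ?thesis
    proof cases
      case 1
      with c2 c3 c4 show ?thesis by (simp add: K_cov_def)
    next
      case 2
      show ?thesis
      proof (cases "\<exists>e \<in> EJ4 E J. f \<in> walk_edges (C4 e)")
        case True
        then obtain e where "e \<in> EJ4 E J" "{i0, j} \<in> walk_edges (C4 e)" using f(1) by blast
        then have no_C2: "{e \<in> EJ2 E J. C2 e = f} = {}"
          using spoke_of_triangle_avoided_by_C2[OF f(2,3) 2] f(1) by blast
        from 2 c3 c4 show ?thesis unfolding K_cov_def no_C2 by simp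
      next
        case False
        then have no_C4: "{e \<in> EJ4 E J. f \<in> walk_edges (C4 e)} = {}" by blast
        from 2 c2 c3 show ?thesis unfolding K_cov_def no_C4 by simp
      qed
    qed
  qed
qed

lemma J_covering: "J_covering V E J C2 C3 C4"
  using C2 C4 EJ3_covering_C3 by (simp add: J_covering_def EJ2_covering_def EJ4_covering_def)

lemma K_cov_EJ1: "f \<in> EJ1 E J \<Longrightarrow> K_cov E J C2 C3 C4 f = 0"
proof (rule K_cov_outside_EJ3_EJ4)
  assume "f \<in> EJ1 E J"
  then have "f \<in> E" "f \<inter> J = {}" by (auto simp: EJ1_def edges_minus_def)
  moreover from this(1) have "f \<noteq> {}" using edge by fastforce
  ultimately show "f \<notin> EJ3 E J" "f \<notin> EJ4 E J" by (auto simp: EJ3_def EJ4_def)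
qed

end

lemma (in good_subset_graph) J_cover_construction_exists:
  "\<exists>nbrs C2 C4. J_cover_construction V E J apex nbrs C2 C4"
proof -
  have "\<forall>i \<in> V - J. \<exists>xs. set xs = N i \<and> distinct xs"
    using finite_N finite_distinct_list by blast
  then obtain nbrs where "\<forall>i \<in> V - J. set (nbrs i) = N i \<and> distinct (nbrs i)"
    by (metis bchoice)
  moreover obtain C2 where "\<forall>e \<in> EJ2 E J. C2 e \<in> EJ3 E J \<and> C2 e \<inter> e \<noteq> {} \<and>
      (\<forall>e' \<in> EJ4 E J. 3 \<le> card (N (apex e')) \<longrightarrow> C2 e \<notin> apex_edges e')"
    using EJ2_cover_edge_exists by (metis bchoice)
  moreover obtain C4 where "\<forall>e \<in> EJ4 E J. odd_closed_walk V E (C4 e) \<and> e \<in> walk_edges (C4 e) \<and>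
      walk_edges (C4 e) \<subseteq> insert e (apex_edges e)"
    using triangle_over_EJ4_edge by (metis bchoice)
  ultimately have "J_cover_construction V E J apex nbrs C2 C4"
    by (intro J_cover_construction.intro good_subset_graph_axioms J_cover_construction_axioms.intro)
      blast+
  then show ?thesis by blast
qed

theorem lemma4p2:
  fixes V :: "'a set" and E :: "'a set set" and J :: "'a set"
  assumes "nice V E"
    and "good_subset V E J"
  shows "\<exists>C2 C3 C4. J_covering V E J C2 C3 C4 \<and>
           (\<forall>f\<in>E - EJ1 E J. K_cov E J C2 C3 C4 f \<le> 5) \<and>
           (\<forall>f\<in>EJ1 E J. K_cov E J C2 C3 C4 f = 0)"
proof -
  obtain apex where "good_subset_graph V E J apex"
    using good_subset_graph_exists[OF assms] by blast
  then interpret good_subset_graph V E J apex .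
  obtain nbrs C2 C4 where "J_cover_construction V E J apex nbrs C2 C4"
    using J_cover_construction_exists by blast
  then interpret J_cover_construction V E J apex nbrs C2 C4 .
  show ?thesis using J_covering K_cov_le_5 K_cov_EJ1 by blast
qed

end
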